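(* Let $n\ge 1$ and $\psi,\eta\in(0,1)^n$. Let $Y\in\{0,1\}$ be a random bit with $\mathbb{P}(Y=1)=\mathbb{P}(Y=0)=1/2$, and conditionally on $Y$ let $X_1,\ldots,X_n\in\{0,1\}$ be independent with $\mathbb{P}(X_i=1\mid Y=1)=\psi_i$ and $\mathbb{P}(X_i=0\mid Y=0)=\eta_i$. Let $f^{\mathrm{OPT}}:\{0,1\}^n\to\{0,1\}$ be a decision rule minimizing $\mathbb{P}(f(X)\neq Y)$ over all $f:\{0,1\}^n\to\{0,1\}$, where $X=(X_1,\ldots,X_n)$. Let $\pi_i=(\psi_i+\eta_i)/2$ and $\gamma_i=\log\frac{\pi_i}{1-\pi_i}$. Then $$\mathbb{P}(f^{\mathrm{OPT}}(X)\neq Y)\ge\frac12\cdot 2^n\sqrt{\prod_{i=1}^n\pi_i(1-\pi_i)}\cdot\exp\Big(-\frac12\sum_{i=1}^n|\gamma_i|\Big).$$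
   Context: $\pi_i$ is the balanced accuracy of expert $i$; $\psi_i$ is its sensitivity and $\eta_i$ its specificity. *)

theory Defs
  imports Complex_Main "HOL-Library.FuncSet"
begin

text \<open>Bits are modelled as bool (True = 1). A point of {0,1}^n is a function
  x :: nat => bool restricted to {..<n} (extensional: x i = undefined outside).\<close>

definition cube :: "nat \<Rightarrow> (nat \<Rightarrow> bool) set" where
  "cube n = PiE {..<n} (\<lambda>_. UNIV)"

text \<open>Joint probabilities P(Y = 1, X = x) and P(Y = 0, X = x) under the model:
  Y uniform, X_i conditionally independent given Y,
  P(X_i = 1 | Y = 1) = psi i, P(X_i = 0 | Y = 0) = eta i.\<close>

definition joint1 :: "nat \<Rightarrow> (nat \<Rightarrow> real) \<Rightarrow> (nat \<Rightarrow> bool) \<Rightarrow> real" where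
  "joint1 n psi x = (1/2) * (\<Prod>i<n. if x i then psi i else 1 - psi i)"

definition joint0 :: "nat \<Rightarrow> (nat \<Rightarrow> real) \<Rightarrow> (nat \<Rightarrow> bool) \<Rightarrow> real" where
  "joint0 n eta x = (1/2) * (\<Prod>i<n. if x i then 1 - eta i else eta i)"

definition err :: "nat \<Rightarrow> (nat \<Rightarrow> real) \<Rightarrow> (nat \<Rightarrow> real) \<Rightarrow> ((nat \<Rightarrow> bool) \<Rightarrow> bool) \<Rightarrow> real" where
  "err n psi eta f =
     (\<Sum>x\<in>cube n. (if f x then 0 else joint1 n psi x) + (if f x then joint0 n eta x else 0))"

end

theory Submission
  imports Defs
begin

(* Every decision rule errs on x with probability at least min (P(Y=1, X=x)) (P(Y=0, X=x)),
   so the Bayes error is bounded below by the sum of these minima.  Since min (\<Prod>a) (\<Prod>b) \<ge> \<Prod>min a b for nonnegative factors, that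
   sum dominates a product over the experts, and expert i contributes
   min \<psi> (1 - \<eta>) + min (1 - \<psi>) \<eta> = 2 min \<pi> (1 - \<pi>) = 2 sqrt (\<pi> (1 - \<pi>)) exp (-|\<gamma>|/2). *)

lemma real_sqrt_prod: "sqrt (\<Prod>i\<in>A. f i) = (\<Prod>i\<in>A. sqrt (f i))"
  by (induction A rule: infinite_finite_induct) (simp_all add: real_sqrt_mult)

lemma prod_min_le_min_prod:
  fixes f g :: "'a \<Rightarrow> 'b :: linordered_idom"
  assumes "\<And>i. i \<in> A \<Longrightarrow> 0 \<le> f i" "\<And>i. i \<in> A \<Longrightarrow> 0 \<le> g i"
  shows "(\<Prod>i\<in>A. min (f i) (g i)) \<le> min (\<Prod>i\<in>A. f i) (\<Prod>i\<in>A. g i)"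
  using assms by (auto intro!: prod_mono)

lemma min_add_min_one_minus:
  fixes p q :: real
  shows "min p (1 - q) + min (1 - p) q = 2 * min ((p + q) / 2) (1 - (p + q) / 2)"
  by (auto simp: min_def field_simps)

lemma sqrt_mult_exp_half_abs_ln_div:
  fixes x y :: real
  assumes "0 < x" "0 < y"
  shows "sqrt (x * y) * exp (-(1/2) * \<bar>ln (x / y)\<bar>) = min x y"
proof -
  have le_case: "sqrt (u * v) * exp (-(1/2) * \<bar>ln (u / v)\<bar>) = u"
    if "0 < u" "u \<le> v" for u v :: real
  proof -
    have "\<bar>ln (u / v)\<bar> = ln (v / u)"
      using that by (simp add: ln_div)
    then have "exp (-(1/2) * \<bar>ln (u / v)\<bar>) = (v / u) powr (-(1/2))"
      using that by (simp add: powr_def)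
    also have "\<dots> = sqrt (u / v)"
      using that by (simp add: powr_minus_divide powr_half_sqrt [symmetric] powr_divide)
    finally have exp_eq: "exp (-(1/2) * \<bar>ln (u / v)\<bar>) = sqrt (u / v)" .
    have "sqrt (u * v) * sqrt (u / v) = sqrt (u * v * (u / v))"
      by (rule real_sqrt_mult [symmetric])
    also have "u * v * (u / v) = u\<^sup>2"
      using that by (simp add: power2_eq_square)
    finally show ?thesis
      using that exp_eq by simp
  qed
  show ?thesis
  proof (cases "x \<le> y")
    case True
    then show ?thesis using le_case assms by simp
  next
    case False
    have "\<bar>ln (x / y)\<bar> = \<bar>ln (y / x)\<bar>"
      using assms by (simp add: ln_div)
    then show ?thesis
      using le_case [of y x] assms False by (simp add: mult.commute)
  qed
qed

lemma sum_cube_prod: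
  fixes g :: "nat \<Rightarrow> bool \<Rightarrow> 'a :: comm_semiring_1"
  shows "(\<Sum>x\<in>cube n. \<Prod>i<n. g i (x i)) = (\<Prod>i<n. g i True + g i False)"
  by (simp add: cube_def prod_sum_PiE [symmetric] UNIV_bool add.commute)

lemma sum_min_joint_le_err:
  "(\<Sum>x\<in>cube n. min (joint1 n psi x) (joint0 n eta x)) \<le> err n psi eta f"
  unfolding err_def by (intro sum_mono) auto

lemma err_ge_prod_sum_min:
  assumes "\<And>i. i < n \<Longrightarrow> 0 \<le> psi i \<and> psi i \<le> 1"
    and "\<And>i. i < n \<Longrightarrow> 0 \<le> eta i \<and> eta i \<le> 1"
  shows "(1/2) * (\<Prod>i<n. min (psi i) (1 - eta i) + min (1 - psi i) (eta i)) \<le> err n psi eta f"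
proof -
  define m where "m i b = min (if b then psi i else 1 - psi i) (if b then 1 - eta i else eta i)"
    for i b
  have "(\<Prod>i<n. min (psi i) (1 - eta i) + min (1 - psi i) (eta i))
      = (\<Sum>x\<in>cube n. \<Prod>i<n. m i (x i))"
    unfolding sum_cube_prod by (simp add: m_def)
  then have "(1/2) * (\<Prod>i<n. min (psi i) (1 - eta i) + min (1 - psi i) (eta i))
      = (\<Sum>x\<in>cube n. (1/2) * (\<Prod>i<n. m i (x i)))"
    by (simp add: sum_distrib_left)
  also have "\<dots> \<le> (\<Sum>x\<in>cube n. min (joint1 n psi x) (joint0 n eta x))"
  proof (intro sum_mono)
    fix x :: "nat \<Rightarrow> bool"
    have "(\<Prod>i<n. m i (x i))
        \<le> min (\<Prod>i<n. if x i then psi i else 1 - psi i) (\<Prod>i<n. if x i then 1 - eta i else eta i)"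
      unfolding m_def by (rule prod_min_le_min_prod) (use assms in auto)
    then show "(1/2) * (\<Prod>i<n. m i (x i)) \<le> min (joint1 n psi x) (joint0 n eta x)"
      by (simp add: joint1_def joint0_def)
  qed
  also have "\<dots> \<le> err n psi eta f"
    by (rule sum_min_joint_le_err)
  finally show ?thesis .
qed

theorem theorem3:
  fixes n :: nat and psi eta :: "nat \<Rightarrow> real" and fopt :: "(nat \<Rightarrow> bool) \<Rightarrow> bool"
  assumes "n \<ge> 1"
    and "\<And>i. i < n \<Longrightarrow> 0 < psi i \<and> psi i < 1"
    and "\<And>i. i < n \<Longrightarrow> 0 < eta i \<and> eta i < 1"
    and "\<And>g. err n psi eta fopt \<le> err n psi eta g"
  shows "let pi = (\<lambda>i. (psi i + eta i) / 2);
             gamma = (\<lambda>i. ln (pi i / (1 - pi i)))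
         in err n psi eta fopt \<ge>
              (1/2) * 2 ^ n * sqrt (\<Prod>i<n. pi i * (1 - pi i))
                * exp (-(1/2) * (\<Sum>i<n. \<bar>gamma i\<bar>))"
proof -
  define pi where "pi i = (psi i + eta i) / 2" for i
  have pi_bounds: "0 < pi i" "0 < 1 - pi i" if "i < n" for i
    using assms(2,3) [OF that] by (auto simp: pi_def)
  have min_sum_eq: "min (psi i) (1 - eta i) + min (1 - psi i) (eta i) = 2 * min (pi i) (1 - pi i)" for i
    unfolding pi_def by (rule min_add_min_one_minus)
  have "2 ^ n * sqrt (\<Prod>i<n. pi i * (1 - pi i)) * exp (-(1/2) * (\<Sum>i<n. \<bar>ln (pi i / (1 - pi i))\<bar>))
      = (\<Prod>i<n. 2 * (sqrt (pi i * (1 - pi i)) * exp (-(1/2) * \<bar>ln (pi i / (1 - pi i))\<bar>)))"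
    unfolding real_sqrt_prod by (simp add: exp_sum sum_distrib_left prod.distrib)
  also have "\<dots> = (\<Prod>i<n. min (psi i) (1 - eta i) + min (1 - psi i) (eta i))"
    using pi_bounds sqrt_mult_exp_half_abs_ln_div by (intro prod.cong refl) (simp add: min_sum_eq)
  finally show ?thesis
    using err_ge_prod_sum_min [of n psi eta fopt] assms(2,3)
    unfolding Let_def pi_def [symmetric] by fastforce
qed

end
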